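(* Let $\mathcal{G}$ be a finite graph with a join decomposition $\mathcal{G}=\mathcal{G}_1+\cdots+\mathcal{G}_k$. Then $$\mathfrak{K}_{\mathcal{G}}(x)=\prod_{j=1}^k\mathfrak{K}_{\mathcal{G}_j}(x|_{\mathcal{G}_j}),$$ and $$R(\mathcal{G})=R(\mathcal{G}_1)\times\cdots\times R(\mathcal{G}_k),$$ where for a graph $\mathcal{H}$ with vertex set $\mathcal{U}$, $R(\mathcal{H})=\{x\in[0,1]^{\mathcal{U}}:\mathfrak{K}_{\mathcal{H}'}(x|_{\mathcal{H}'})>0\text{ for every induced subgraph }\mathcal{H}'\subseteq\mathcal{H}\}$.
   Context: Graphs are finite, simple, undirected. A clique is a set of pairwise adjacent vertices (the empty set is a clique). An induced subgraph $\mathcal{H}'$ has vertex set $\mathcal{U}'\subseteq\mathcal{U}$ and all edges between vertices of $\mathcal{U}'$; $x|_{\mathcal{H}'}=(x_v)_{v\in\mathcal{U}'}$. $\mathfrak{K}_{\mathcal{H}}(x)=\sum_{\mathcal{K}\text{ clique}}(-1)^{|\mathcal{K}|}\prod_{v\in\mathcal{K}}x_v$, the empty clique contributing $1$. The graph join $\mathcal{G}_1+\cdots+\mathcal{G}_k$ has vertex set $\mathcal{V}_1\sqcup\cdots\sqcup\mathcal{V}_k$, two vertices being adjacent iff they are adjacent within the same $\mathcal{G}_i$ or lie in different $\mathcal{G}_i$'s. The identification $[0,1]^{\mathcal{V}}=\prod_j[0,1]^{\mathcal{V}_j}$ is used. *)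

theory Defs
  imports "HOL-Library.FuncSet" Complex_Main
begin

definition simple_graph :: "'a set \<Rightarrow> ('a \<Rightarrow> 'a \<Rightarrow> bool) \<Rightarrow> bool" where
  "simple_graph V E \<longleftrightarrow> finite V \<and> (\<forall>u\<in>V. \<forall>v\<in>V. E u v \<longrightarrow> E v u) \<and> (\<forall>v\<in>V. \<not> E v v)"

definition is_clique :: "('a \<Rightarrow> 'a \<Rightarrow> bool) \<Rightarrow> 'a set \<Rightarrow> bool" where
  "is_clique E K \<longleftrightarrow> (\<forall>u\<in>K. \<forall>v\<in>K. u \<noteq> v \<longrightarrow> E u v)"

text \<open>Clique polynomial of the graph (V,E) evaluated at x (only x on V matters,
 so this is K_H(x restricted to H)).\<close>
definition clique_poly :: "'a set \<Rightarrow> ('a \<Rightarrow> 'a \<Rightarrow> bool) \<Rightarrow> ('a \<Rightarrow> real) \<Rightarrow> real" where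
  "clique_poly V E x = (\<Sum>K\<in>{K. K \<subseteq> V \<and> is_clique E K}. (-1) ^ card K * (\<Prod>v\<in>K. x v))"

definition Rset :: "'a set \<Rightarrow> ('a \<Rightarrow> 'a \<Rightarrow> bool) \<Rightarrow> ('a \<Rightarrow> real) set" where
  "Rset V E = {x \<in> (\<Pi>\<^sub>E v\<in>V. {0..1}). \<forall>U. U \<subseteq> V \<longrightarrow> clique_poly U E x > 0}"

definition is_graph_join :: "'a set \<Rightarrow> ('a \<Rightarrow> 'a \<Rightarrow> bool) \<Rightarrow> nat \<Rightarrow> (nat \<Rightarrow> 'a set)
      \<Rightarrow> (nat \<Rightarrow> 'a \<Rightarrow> 'a \<Rightarrow> bool) \<Rightarrow> bool" where
  "is_graph_join V E k Vs Es \<longleftrightarrow>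
     V = (\<Union>j<k. Vs j) \<and>
     (\<forall>i<k. \<forall>j<k. i \<noteq> j \<longrightarrow> Vs i \<inter> Vs j = {}) \<and>
     (\<forall>u\<in>V. \<forall>v\<in>V. E u v \<longleftrightarrow>
        ((\<exists>j<k. u \<in> Vs j \<and> v \<in> Vs j \<and> Es j u v) \<or>
         (\<exists>i<k. \<exists>j<k. i \<noteq> j \<and> u \<in> Vs i \<and> v \<in> Vs j)))"

end

theory Submission
  imports Defs
begin

text \<open>The cliques of a join \<open>G\<^sub>1 + G\<^sub>2\<close> are exactly the disjoint unions of a clique of
  \<open>G\<^sub>1\<close> and a clique of \<open>G\<^sub>2\<close>, and the signed monomial \<open>(-1)\<^bsup>|K|\<^esup> \<Prod>\<^sub>v\<^sub>\<in>\<^sub>K x\<^sub>v\<close> is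
  multiplicative under disjoint unions, so the clique polynomial factors. An induced subgraph of
  a join is the join of its traces on the parts, so its clique polynomial is a product of clique
  polynomials of induced subgraphs of the parts; and on an induced subgraph of a single part
  the clique polynomials of \<open>G\<close> and of that part coincide.\<close>

definition cliques :: "'a set \<Rightarrow> ('a \<Rightarrow> 'a \<Rightarrow> bool) \<Rightarrow> 'a set set" where
  "cliques V E = {K. K \<subseteq> V \<and> is_clique E K}"

lemma clique_poly_eq_sum_cliques:
  "clique_poly V E x = (\<Sum>K\<in>cliques V E. (-1) ^ card K * (\<Prod>v\<in>K. x v))"
  unfolding clique_poly_def cliques_def ..

lemma clique_poly_empty [simp]: "clique_poly {} E x = 1"
proof -
  have "cliques {} E = {{}}" by (auto simp: cliques_def is_clique_def)
  then show ?thesis by (simp add: clique_poly_eq_sum_cliques)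
qed

lemma clique_poly_cong_edges:
  assumes "\<And>u v. u \<in> V \<Longrightarrow> v \<in> V \<Longrightarrow> u \<noteq> v \<Longrightarrow> E u v \<longleftrightarrow> E' u v"
  shows "clique_poly V E x = clique_poly V E' x"
proof -
  have "cliques V E = cliques V E'"
    using assms unfolding cliques_def is_clique_def by blast
  then show ?thesis by (simp add: clique_poly_eq_sum_cliques)
qed

lemma clique_poly_cong_values:
  assumes "\<And>v. v \<in> V \<Longrightarrow> x v = y v"
  shows "clique_poly V E x = clique_poly V E y"
  unfolding clique_poly_def using assms
  by (intro sum.cong refl arg_cong2[where f = "(*)"] prod.cong) auto

lemma clique_poly_restrict:
  "V \<subseteq> A \<Longrightarrow> clique_poly V E (restrict x A) = clique_poly V E x"
  by (rule clique_poly_cong_values) auto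

lemma bij_betw_Un_cliques:
  assumes "A \<inter> B = {}" and "\<And>u v. u \<in> A \<Longrightarrow> v \<in> B \<Longrightarrow> E u v \<and> E v u"
  shows "bij_betw (\<lambda>(K\<^sub>1, K\<^sub>2). K\<^sub>1 \<union> K\<^sub>2) (cliques A E \<times> cliques B E) (cliques (A \<union> B) E)"
proof (rule bij_betw_byWitness[where f' = "\<lambda>K. (K \<inter> A, K \<inter> B)"])
  show "\<forall>p\<in>cliques A E \<times> cliques B E. (\<lambda>K. (K \<inter> A, K \<inter> B)) ((\<lambda>(K\<^sub>1, K\<^sub>2). K\<^sub>1 \<union> K\<^sub>2) p) = p"
    using assms(1) by (auto simp: cliques_def)
  show "\<forall>K\<in>cliques (A \<union> B) E. (\<lambda>(K\<^sub>1, K\<^sub>2). K\<^sub>1 \<union> K\<^sub>2) (K \<inter> A, K \<inter> B) = K"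
    by (auto simp: cliques_def)
  show "(\<lambda>(K\<^sub>1, K\<^sub>2). K\<^sub>1 \<union> K\<^sub>2) ` (cliques A E \<times> cliques B E) \<subseteq> cliques (A \<union> B) E"
    using assms(2) unfolding cliques_def is_clique_def by blast
  show "(\<lambda>K. (K \<inter> A, K \<inter> B)) ` cliques (A \<union> B) E \<subseteq> cliques A E \<times> cliques B E"
    unfolding cliques_def is_clique_def by blast
qed

lemma clique_poly_Un:
  assumes "finite A" "finite B" "A \<inter> B = {}"
    and cross: "\<And>u v. u \<in> A \<Longrightarrow> v \<in> B \<Longrightarrow> E u v \<and> E v u"
  shows "clique_poly (A \<union> B) E x = clique_poly A E x * clique_poly B E x"
proof -
  define w where "w K = (-1::real) ^ card K * (\<Prod>v\<in>K. x v)" for K :: "'a set"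
  have w_Un: "w (K\<^sub>1 \<union> K\<^sub>2) = w K\<^sub>1 * w K\<^sub>2"
    if "(K\<^sub>1, K\<^sub>2) \<in> cliques A E \<times> cliques B E" for K\<^sub>1 K\<^sub>2
  proof -
    have "K\<^sub>1 \<subseteq> A" "K\<^sub>2 \<subseteq> B" using that by (auto simp: cliques_def)
    then have "finite K\<^sub>1" "finite K\<^sub>2" "K\<^sub>1 \<inter> K\<^sub>2 = {}"
      using assms(1-3) finite_subset by blast+
    then show ?thesis
      by (simp add: w_def card_Un_disjoint prod.union_disjoint power_add)
  qed
  have "clique_poly (A \<union> B) E x = (\<Sum>(K\<^sub>1, K\<^sub>2)\<in>cliques A E \<times> cliques B E. w (K\<^sub>1 \<union> K\<^sub>2))"
    unfolding clique_poly_eq_sum_cliques w_def[symmetric]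
    using sum.reindex_bij_betw[OF bij_betw_Un_cliques[OF assms(3) cross], where g = w]
    by (simp add: case_prod_unfold)
  also have "\<dots> = (\<Sum>(K\<^sub>1, K\<^sub>2)\<in>cliques A E \<times> cliques B E. w K\<^sub>1 * w K\<^sub>2)"
    using w_Un by (intro sum.cong) auto
  also have "\<dots> = clique_poly A E x * clique_poly B E x"
    by (simp add: clique_poly_eq_sum_cliques w_def[symmetric] sum_product sum.cartesian_product)
  finally show ?thesis .
qed

lemma clique_poly_UNION:
  assumes "finite I" and "\<And>i. i \<in> I \<Longrightarrow> finite (Vs i)"
    and "\<And>i j. i \<in> I \<Longrightarrow> j \<in> I \<Longrightarrow> i \<noteq> j \<Longrightarrow> Vs i \<inter> Vs j = {}"
    and "\<And>i j u v. i \<in> I \<Longrightarrow> j \<in> I \<Longrightarrow> i \<noteq> j \<Longrightarrow> u \<in> Vs i \<Longrightarrow> v \<in> Vs j \<Longrightarrow> E u v"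
  shows "clique_poly (\<Union>i\<in>I. Vs i) E x = (\<Prod>i\<in>I. clique_poly (Vs i) E x)"
  using assms
proof (induction I rule: finite_induct)
  case empty
  then show ?case by simp
next
  case (insert j I)
  have "clique_poly (Vs j \<union> (\<Union>i\<in>I. Vs i)) E x = clique_poly (Vs j) E x * clique_poly (\<Union>i\<in>I. Vs i) E x"
  proof (rule clique_poly_Un)
    show "Vs j \<inter> (\<Union>i\<in>I. Vs i) = {}"
      using insert.prems(2) insert.hyps(2) by fastforce
    show "E u v \<and> E v u" if "u \<in> Vs j" "v \<in> (\<Union>i\<in>I. Vs i)" for u v
      using that insert.prems(3) insert.hyps(2) by (metis UN_E insertCI)
  qed (use insert.hyps(1) insert.prems(1) in auto)
  moreover have "clique_poly (\<Union>i\<in>I. Vs i) E x = (\<Prod>i\<in>I. clique_poly (Vs i) E x)"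
    using insert.prems by (intro insert.IH; meson insertCI)
  ultimately show ?case using insert.hyps by simp
qed

lemma graph_join_vertices:
  "is_graph_join V E k Vs Es \<Longrightarrow> V = (\<Union>j<k. Vs j)"
  unfolding is_graph_join_def by (rule conjunct1)

lemma graph_join_disjoint:
  "is_graph_join V E k Vs Es \<Longrightarrow> i < k \<Longrightarrow> j < k \<Longrightarrow> i \<noteq> j \<Longrightarrow> Vs i \<inter> Vs j = {}"
  unfolding is_graph_join_def by blast

lemma graph_join_edges:
  "is_graph_join V E k Vs Es \<Longrightarrow> u \<in> V \<Longrightarrow> v \<in> V \<Longrightarrow>
     E u v \<longleftrightarrow> (\<exists>j<k. u \<in> Vs j \<and> v \<in> Vs j \<and> Es j u v) \<or>
                (\<exists>i<k. \<exists>j<k. i \<noteq> j \<and> u \<in> Vs i \<and> v \<in> Vs j)"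
  unfolding is_graph_join_def by blast

lemma graph_join_edge_within:
  assumes join: "is_graph_join V E k Vs Es" and "j < k" "u \<in> Vs j" "v \<in> Vs j"
  shows "E u v \<longleftrightarrow> Es j u v"
proof -
  have "u \<in> V" "v \<in> V" using assms graph_join_vertices[OF join] by auto
  moreover have "\<not> (\<exists>i<k. \<exists>i'<k. i \<noteq> i' \<and> u \<in> Vs i \<and> v \<in> Vs i')"
    and "(\<exists>i<k. u \<in> Vs i \<and> v \<in> Vs i \<and> Es i u v) \<longleftrightarrow> Es j u v"
    using assms graph_join_disjoint[OF join] by blast+
  ultimately show ?thesis using graph_join_edges[OF join] by blast
qed

lemma graph_join_edge_across:
  assumes join: "is_graph_join V E k Vs Es" and "i < k" "j < k" "i \<noteq> j" "u \<in> Vs i" "v \<in> Vs j"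
  shows "E u v"
proof -
  have "u \<in> V" "v \<in> V" using assms graph_join_vertices[OF join] by auto
  then show ?thesis using assms graph_join_edges[OF join] by blast
qed

lemma clique_poly_graph_join_part:
  assumes "is_graph_join V E k Vs Es" "j < k" "U \<subseteq> Vs j"
  shows "clique_poly U E x = clique_poly U (Es j) x"
  using graph_join_edge_within[OF assms(1,2)] assms(3) by (intro clique_poly_cong_edges) blast

lemma clique_poly_graph_join_induced:
  assumes join: "is_graph_join V E k Vs Es" and "finite V" "U \<subseteq> V"
  shows "clique_poly U E x = (\<Prod>j<k. clique_poly (U \<inter> Vs j) (Es j) x)"
proof -
  have "U = (\<Union>j<k. U \<inter> Vs j)" using \<open>U \<subseteq> V\<close> graph_join_vertices[OF join] by auto
  also have "clique_poly \<dots> E x = (\<Prod>j<k. clique_poly (U \<inter> Vs j) E x)"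
  proof (rule clique_poly_UNION)
    show "finite (U \<inter> Vs j)" for j using \<open>finite V\<close> \<open>U \<subseteq> V\<close> finite_subset by blast
  qed (use graph_join_disjoint[OF join] graph_join_edge_across[OF join] in auto)
  also have "\<dots> = (\<Prod>j<k. clique_poly (U \<inter> Vs j) (Es j) x)"
    using clique_poly_graph_join_part[OF join] by (intro prod.cong) auto
  finally show ?thesis .
qed

lemma Rset_graph_join_part:
  assumes join: "is_graph_join V E k Vs Es" and "j < k" and x: "x \<in> Rset V E"
  shows "restrict x (Vs j) \<in> Rset (Vs j) (Es j)"
proof -
  have sub: "Vs j \<subseteq> V" using graph_join_vertices[OF join] \<open>j < k\<close> by auto
  have "clique_poly U (Es j) (restrict x (Vs j)) > 0" if "U \<subseteq> Vs j" for U
  proof -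
    have "clique_poly U (Es j) (restrict x (Vs j)) = clique_poly U E x"
      using clique_poly_restrict clique_poly_graph_join_part[OF join \<open>j < k\<close>] that by metis
    also have "\<dots> > 0" using x that sub unfolding Rset_def by auto
    finally show ?thesis .
  qed
  moreover have "restrict x (Vs j) \<in> (\<Pi>\<^sub>E v\<in>Vs j. {0..1})" using x sub unfolding Rset_def by auto
  ultimately show ?thesis unfolding Rset_def by blast
qed

lemma Rset_graph_join_glue:
  assumes join: "is_graph_join V E k Vs Es" and "finite V" and "x \<in> extensional V"
    and parts: "\<And>j. j < k \<Longrightarrow> restrict x (Vs j) \<in> Rset (Vs j) (Es j)"
  shows "x \<in> Rset V E"
proof -
  have "x v \<in> {0..1}" if "v \<in> V" for v
  proof -
    obtain j where "j < k" "v \<in> Vs j" using graph_join_vertices[OF join] \<open>v \<in> V\<close> by auto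
    then show ?thesis using parts[of j] unfolding Rset_def by auto
  qed
  then have "x \<in> (\<Pi>\<^sub>E v\<in>V. {0..1})" using \<open>x \<in> extensional V\<close> by (auto simp: PiE_def)
  moreover have "clique_poly U E x > 0" if "U \<subseteq> V" for U
  proof -
    have "clique_poly (U \<inter> Vs j) (Es j) x > 0" if "j < k" for j
    proof -
      have "clique_poly (U \<inter> Vs j) (Es j) (restrict x (Vs j)) > 0"
        using parts[OF that] unfolding Rset_def by blast
      then show ?thesis by (simp add: clique_poly_restrict)
    qed
    then show ?thesis
      unfolding clique_poly_graph_join_induced[OF join \<open>finite V\<close> \<open>U \<subseteq> V\<close>]
      by (intro prod_pos) simp
  qed
  ultimately show ?thesis unfolding Rset_def by blast
qed

theorem lemma4p7:
  fixes V :: "'a set" and E :: "'a \<Rightarrow> 'a \<Rightarrow> bool" and k :: nat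
    and Vs :: "nat \<Rightarrow> 'a set" and Es :: "nat \<Rightarrow> 'a \<Rightarrow> 'a \<Rightarrow> bool"
  assumes "simple_graph V E"
    and "\<And>j. j < k \<Longrightarrow> simple_graph (Vs j) (Es j)"
    and "is_graph_join V E k Vs Es"
  shows "(\<forall>x. clique_poly V E x = (\<Prod>j<k. clique_poly (Vs j) (Es j) x)) \<and>
         (Rset V E = {x \<in> extensional V. \<forall>j<k. restrict x (Vs j) \<in> Rset (Vs j) (Es j)})"
proof
  have "finite V" using assms(1) unfolding simple_graph_def by simp
  have parts: "V \<inter> Vs j = Vs j" if "j < k" for j
    using graph_join_vertices[OF assms(3)] that by auto
  show "\<forall>x. clique_poly V E x = (\<Prod>j<k. clique_poly (Vs j) (Es j) x)"
    using clique_poly_graph_join_induced[OF assms(3) \<open>finite V\<close> order_refl] parts by simp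
  show "Rset V E = {x \<in> extensional V. \<forall>j<k. restrict x (Vs j) \<in> Rset (Vs j) (Es j)}"
  proof (intro set_eqI iffI)
    fix x assume x: "x \<in> Rset V E"
    then have "x \<in> extensional V" by (simp add: Rset_def PiE_def)
    with x show "x \<in> {x \<in> extensional V. \<forall>j<k. restrict x (Vs j) \<in> Rset (Vs j) (Es j)}"
      using Rset_graph_join_part[OF assms(3)] by blast
  next
    fix x assume "x \<in> {x \<in> extensional V. \<forall>j<k. restrict x (Vs j) \<in> Rset (Vs j) (Es j)}"
    then show "x \<in> Rset V E"
      using Rset_graph_join_glue[OF assms(3) \<open>finite V\<close>] by simp
  qed
qed

end
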